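(* Let $n\ge2$ be even and $L\ge1$ an integer. Let $\rho_{\text{in}}=U(\boldsymbol\beta)(|0\rangle\langle0|)^{\otimes n}U(\boldsymbol\beta)^\dagger$, where $U(\boldsymbol\beta)=V_{2L+1}U_LU_{L-1}\cdots U_1X^{\otimes n}$ is the $L$-layer encoding circuit described in the context. Then $$\mathbb{E}_{\boldsymbol\beta}\,\alpha(\rho_{\text{in}})\ge 2^{-2L},$$ where $\alpha(\rho)=\text{Tr}[(\sigma_1\otimes I^{\otimes(n-1)})\rho]^2+\text{Tr}[(\sigma_3\otimes I^{\otimes(n-1)})\rho]^2$ and the expectation is over all parameters $\beta_j^{(k)}$ drawn independently and uniformly from $[0,2\pi]$.
   Context: Pauli matrices $\sigma_0=I,\sigma_1=X,\sigma_2=Y,\sigma_3=Z$. Qubits are numbered $1,\dots,n$. For $j=1,\dots,2L+1$, $V_j=W_j^{(1)}\otimes\cdots\otimes W_j^{(n)}$ with $W_j^{(k)}=e^{-i\beta_j^{(k)}\sigma_2}$ acting on qubit $k$. $CZ$ on qubits $(a,b)$ is $|0\rangle\langle0|_a\otimes I_b+|1\rangle\langle1|_a\otimes(\sigma_3)_b$. $CZ_1$ is the product of $CZ$ gates on the pairs $(1,2),(3,4),\dots,(n-1,n)$; $CZ_2$ is the product of $CZ$ gates on the pairs $(2,3),(4,5),\dots,(n-2,n-1)$ and $(n,1)$. The $j$-th alternating layer is $U_j=CZ_1V_{2j}CZ_2V_{2j-1}$. *)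

theory Defs
  imports "HOL-Probability.Probability" "Jordan_Normal_Form.Matrix"
begin

text \<open>Basis index i in {0..<2^n};
  qubit k (1 \<le> k \<le> n) corresponds to the k-th tensor factor, i.e. bit (n-k) of i
  (qubit 1 is the most significant / leftmost factor).\<close>

definition qbit :: "nat \<Rightarrow> nat \<Rightarrow> nat \<Rightarrow> nat" where
  "qbit n k i = (i div 2 ^ (n - k)) mod 2"

definition tensor_op :: "nat \<Rightarrow> (nat \<Rightarrow> complex mat) \<Rightarrow> complex mat" where
  "tensor_op n G = mat (2 ^ n) (2 ^ n)
     (\<lambda>(i, j). \<Prod>k\<in>{1..n}. G k $$ (qbit n k i, qbit n k j))"

definition dagger :: "complex mat \<Rightarrow> complex mat" where
  "dagger A = mat (dim_col A) (dim_row A) (\<lambda>(i, j). cnj (A $$ (j, i)))"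

definition mtrace :: "complex mat \<Rightarrow> complex" where
  "mtrace A = (\<Sum>i<dim_row A. A $$ (i, i))"

definition sigma :: "nat \<Rightarrow> complex mat" where
  "sigma a = (if a = 1 then mat_of_rows_list 2 [[0, 1], [1, 0]]
         else if a = 2 then mat_of_rows_list 2 [[0, -\<i>], [\<i>, 0]]
         else if a = 3 then mat_of_rows_list 2 [[1, 0], [0, -1]]
         else 1\<^sub>m 2)"

definition proj0 :: "complex mat" where "proj0 = mat_of_rows_list 2 [[1, 0], [0, 0]]"
definition proj1 :: "complex mat" where "proj1 = mat_of_rows_list 2 [[0, 0], [0, 1]]"

text \<open>W(beta) = exp(-i beta sigma_2) = cos beta I - i sin beta sigma_2 (since sigma_2^2 = I).\<close>
definition Wgate :: "real \<Rightarrow> complex mat" where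
  "Wgate b = complex_of_real (cos b) \<cdot>\<^sub>m 1\<^sub>m 2 - (\<i> * complex_of_real (sin b)) \<cdot>\<^sub>m sigma 2"

definition CZ :: "nat \<Rightarrow> nat \<Rightarrow> nat \<Rightarrow> complex mat" where
  "CZ n a b = tensor_op n (\<lambda>k. if k = a then proj0 else 1\<^sub>m 2)
            + tensor_op n (\<lambda>k. if k = a then proj1 else if k = b then sigma 3 else 1\<^sub>m 2)"

definition CZ1 :: "nat \<Rightarrow> complex mat" where
  "CZ1 n = foldr (\<lambda>m A. CZ n (2 * m - 1) (2 * m) * A) [1..<n div 2 + 1] (1\<^sub>m (2 ^ n))"

text \<open>Pairs (2,3),(4,5),...,(n-2,n-1) and (n,1).\<close>
definition CZ2 :: "nat \<Rightarrow> complex mat" where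
  "CZ2 n = foldr (\<lambda>m A. CZ n (2 * m) (2 * m + 1) * A) [1..<n div 2] (CZ n n 1)"

text \<open>V_j = W_j^(1) \<otimes> ... \<otimes> W_j^(n), with beta j k = beta_j^(k).\<close>
definition Vlayer :: "nat \<Rightarrow> (nat \<Rightarrow> nat \<Rightarrow> real) \<Rightarrow> nat \<Rightarrow> complex mat" where
  "Vlayer n \<beta> j = tensor_op n (\<lambda>k. Wgate (\<beta> j k))"

definition Ulayer :: "nat \<Rightarrow> (nat \<Rightarrow> nat \<Rightarrow> real) \<Rightarrow> nat \<Rightarrow> complex mat" where
  "Ulayer n \<beta> j = CZ1 n * Vlayer n \<beta> (2 * j) * CZ2 n * Vlayer n \<beta> (2 * j - 1)"

fun layers :: "nat \<Rightarrow> (nat \<Rightarrow> nat \<Rightarrow> real) \<Rightarrow> nat \<Rightarrow> complex mat" where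
  "layers n \<beta> 0 = 1\<^sub>m (2 ^ n)"
| "layers n \<beta> (Suc l) = Ulayer n \<beta> (Suc l) * layers n \<beta> l"

definition Ucirc :: "nat \<Rightarrow> nat \<Rightarrow> (nat \<Rightarrow> nat \<Rightarrow> real) \<Rightarrow> complex mat" where
  "Ucirc n L \<beta> = Vlayer n \<beta> (2 * L + 1) * layers n \<beta> L * tensor_op n (\<lambda>_. sigma 1)"

definition rho_in :: "nat \<Rightarrow> nat \<Rightarrow> (nat \<Rightarrow> nat \<Rightarrow> real) \<Rightarrow> complex mat" where
  "rho_in n L \<beta> = Ucirc n L \<beta> * tensor_op n (\<lambda>_. proj0) * dagger (Ucirc n L \<beta>)"

text \<open>alpha(rho) = Tr[(sigma_1 \<otimes> I)rho]^2 + Tr[(sigma_3 \<otimes> I)rho]^2; the traces are real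
  for Hermitian rho, so we take real parts.\<close>
definition alpha :: "nat \<Rightarrow> complex mat \<Rightarrow> real" where
  "alpha n \<rho> = (Re (mtrace (tensor_op n (\<lambda>k. if k = 1 then sigma 1 else 1\<^sub>m 2) * \<rho>)))\<^sup>2
             + (Re (mtrace (tensor_op n (\<lambda>k. if k = 1 then sigma 3 else 1\<^sub>m 2) * \<rho>)))\<^sup>2"

definition beta_measure :: "nat \<Rightarrow> nat \<Rightarrow> ((nat \<times> nat) \<Rightarrow> real) measure" where
  "beta_measure n L = PiM ({1..2 * L + 1} \<times> {1..n}) (\<lambda>_. uniform_measure lborel {0..2 * pi})"

end

theory Submission
  imports Defs
begin

text \<open>The CZ layers are diagonal with entries \<plusminus>1, so they commute with Z on qubit 1 and leave
  <Z_1> = Tr[(Z \<otimes> I) \<rho>] unchanged, while a rotation layer V_j acts on the pair (<Z_1>, <X_1>)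
  as a plane rotation by the angle 2 \<beta>_j^(1). This angle is uniform and independent of the state
  it acts on, so by Fubini the mean of the rotated <Z_1>^2 is the mean of (<Z_1>^2 + <X_1>^2)/2,
  at least half the mean of <Z_1>^2. A layer U_j contains two rotations, hence costs at most a
  factor 4, starting from <Z_1>^2 = 1 in the state |1...1> = X^n |0...0>. Finally V_{2L+1} preserves
  \<alpha> = <X_1>^2 + <Z_1>^2 \<ge> <Z_1>^2.\<close>

section \<open>Matrix algebra\<close>

lemma index_mult_mat_sum:
  assumes "A \<in> carrier_mat nr k" "B \<in> carrier_mat k nc" "i < nr" "j < nc"
  shows "(A * B) $$ (i, j) = (\<Sum>m<k. A $$ (i, m) * B $$ (m, j))"
  using assms by (auto simp: scalar_prod_def lessThan_atLeast0 intro!: sum.cong)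

lemma less_2_cases: "(i::nat) < 2 \<longleftrightarrow> i = 0 \<or> i = 1"
  by auto

lemma dim_dagger [simp]: "dim_row (dagger A) = dim_col A" "dim_col (dagger A) = dim_row A"
  by (auto simp: dagger_def)

lemma dagger_carrier_mat [simp]: "A \<in> carrier_mat r c \<Longrightarrow> dagger A \<in> carrier_mat c r"
  by (auto simp: dagger_def)

lemma index_dagger: "i < dim_col A \<Longrightarrow> j < dim_row A \<Longrightarrow> dagger A $$ (i, j) = cnj (A $$ (j, i))"
  by (auto simp: dagger_def)

lemma dagger_one_mat [simp]: "dagger (1\<^sub>m N) = 1\<^sub>m N"
  by (rule eq_matI) (auto simp: dagger_def)

lemma dagger_mult:
  assumes "A \<in> carrier_mat r k" "B \<in> carrier_mat k c"
  shows "dagger (A * B) = dagger B * dagger A"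
proof (rule eq_matI)
  fix i j assume "i < dim_row (dagger B * dagger A)" "j < dim_col (dagger B * dagger A)"
  then have ij: "i < c" "j < r" using assms by auto
  have "dagger (A * B) $$ (i, j) = (\<Sum>m<k. cnj (A $$ (j, m)) * cnj (B $$ (m, i)))"
    using ij assms by (simp del: index_mult_mat(1) add: index_dagger index_mult_mat_sum[of _ r k _ c])
  also have "\<dots> = (dagger B * dagger A) $$ (i, j)"
    using ij assms by (simp del: index_mult_mat(1) add: index_dagger index_mult_mat_sum[of _ c k _ r] mult.commute)
  finally show "dagger (A * B) $$ (i, j) = (dagger B * dagger A) $$ (i, j)" .
qed (use assms in auto)

lemma mtrace_mult_comm:
  assumes "A \<in> carrier_mat N K" "B \<in> carrier_mat K N"
  shows "mtrace (A * B) = mtrace (B * A)"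
proof -
  have "mtrace (A * B) = (\<Sum>i<N. \<Sum>m<K. A $$ (i, m) * B $$ (m, i))"
    using assms by (auto simp del: index_mult_mat(1) simp: mtrace_def index_mult_mat_sum[of _ N K _ N])
  also have "\<dots> = (\<Sum>m<K. \<Sum>i<N. B $$ (m, i) * A $$ (i, m))"
    by (subst sum.swap) (simp add: mult.commute)
  also have "\<dots> = mtrace (B * A)"
    using assms by (auto simp del: index_mult_mat(1) simp: mtrace_def index_mult_mat_sum[of _ K N _ K])
  finally show ?thesis .
qed

definition sandwich :: "complex mat \<Rightarrow> complex mat \<Rightarrow> complex mat" where
  "sandwich A S = A * S * dagger A"

lemma sandwich_carrier_mat [simp]:
  "A \<in> carrier_mat N N \<Longrightarrow> S \<in> carrier_mat N N \<Longrightarrow> sandwich A S \<in> carrier_mat N N"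
  by (auto simp: sandwich_def)

lemma sandwich_mult:
  assumes "A \<in> carrier_mat N N" "B \<in> carrier_mat N N" "S \<in> carrier_mat N N"
  shows "sandwich (A * B) S = sandwich A (sandwich B S)"
  using assms
  by (simp add: sandwich_def dagger_mult[of _ N N _ N] assoc_mult_mat[of _ N N _ N _ N] mult_carrier_mat[of _ N N _ N])

lemma mtrace_mult_sandwich:
  assumes "P \<in> carrier_mat N N" "A \<in> carrier_mat N N" "S \<in> carrier_mat N N"
  shows "mtrace (P * sandwich A S) = mtrace (dagger A * P * A * S)"
proof -
  have "mtrace (P * sandwich A S) = mtrace ((P * A * S) * dagger A)"
    using assms by (simp add: sandwich_def assoc_mult_mat[of _ N N _ N _ N])
  also have "\<dots> = mtrace (dagger A * (P * A * S))"
    using assms by (intro mtrace_mult_comm[of _ N N]) auto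
  also have "\<dots> = mtrace (dagger A * P * A * S)"
    using assms by (simp add: assoc_mult_mat[of _ N N _ N _ N])
  finally show ?thesis .
qed

lemma mtrace_add: "A \<in> carrier_mat N N \<Longrightarrow> B \<in> carrier_mat N N \<Longrightarrow> mtrace (A + B) = mtrace A + mtrace B"
  by (simp add: mtrace_def sum.distrib)

lemma mtrace_smult: "A \<in> carrier_mat N N \<Longrightarrow> mtrace (c \<cdot>\<^sub>m A) = c * mtrace A"
  by (simp add: mtrace_def sum_distrib_left)

lemma mtrace_lincomb_mult:
  assumes "A \<in> carrier_mat N N" "B \<in> carrier_mat N N" "S \<in> carrier_mat N N"
  shows "mtrace ((c \<cdot>\<^sub>m A + d \<cdot>\<^sub>m B) * S) = c * mtrace (A * S) + d * mtrace (B * S)"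
proof -
  have "(c \<cdot>\<^sub>m A + d \<cdot>\<^sub>m B) * S = c \<cdot>\<^sub>m (A * S) + d \<cdot>\<^sub>m (B * S)"
    using assms by (simp add: add_mult_distrib_mat[of _ N N] mult_smult_assoc_mat[of _ N N])
  then show ?thesis
    using assms by (simp add: mtrace_add[of _ N] mtrace_smult[of _ N])
qed

definition mat2 :: "complex \<Rightarrow> complex \<Rightarrow> complex \<Rightarrow> complex \<Rightarrow> complex mat" where
  "mat2 a b c d = mat 2 2 (\<lambda>(i, j). if i = 0 then (if j = 0 then a else b) else (if j = 0 then c else d))"

lemma mat2_carrier_mat [simp]:
  "mat2 a b c d \<in> carrier_mat 2 2" "dim_row (mat2 a b c d) = 2" "dim_col (mat2 a b c d) = 2"
  by (simp_all add: mat2_def)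

lemma index_mat2 [simp]:
  "mat2 a b c d $$ (0, 0) = a" "mat2 a b c d $$ (0, 1) = b"
  "mat2 a b c d $$ (1, 0) = c" "mat2 a b c d $$ (1, 1) = d"
  "mat2 a b c d $$ (0, Suc 0) = b" "mat2 a b c d $$ (Suc 0, 0) = c" "mat2 a b c d $$ (Suc 0, Suc 0) = d"
  by (auto simp: mat2_def)

lemma mat2_mult [simp]:
  "mat2 a b c d * mat2 e f g h = mat2 (a*e + b*g) (a*f + b*h) (c*e + d*g) (c*f + d*h)"
proof (rule eq_matI)
  fix i j assume "i < dim_row (mat2 (a*e + b*g) (a*f + b*h) (c*e + d*g) (c*f + d*h))"
    "j < dim_col (mat2 (a*e + b*g) (a*f + b*h) (c*e + d*g) (c*f + d*h))"
  then have "i < 2" "j < 2" by (auto simp: mat2_def)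
  then show "(mat2 a b c d * mat2 e f g h) $$ (i, j) = mat2 (a*e + b*g) (a*f + b*h) (c*e + d*g) (c*f + d*h) $$ (i, j)"
    by (subst index_mult_mat_sum[of _ 2 2 _ 2]) (auto simp: less_Suc_eq numeral_2_eq_2)
qed (auto simp: mat2_def)

lemma dagger_mat2 [simp]: "dagger (mat2 a b c d) = mat2 (cnj a) (cnj c) (cnj b) (cnj d)"
  by (rule eq_matI) (auto simp: dagger_def mat2_def less_2_cases)

lemma mat2_add [simp]: "mat2 a b c d + mat2 e f g h = mat2 (a + e) (b + f) (c + g) (d + h)"
  by (rule eq_matI) (auto simp: mat2_def)

lemma mat2_minus [simp]: "mat2 a b c d - mat2 e f g h = mat2 (a - e) (b - f) (c - g) (d - h)"
  by (rule eq_matI) (auto simp: mat2_def)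

lemma smult_mat2 [simp]: "x \<cdot>\<^sub>m mat2 a b c d = mat2 (x * a) (x * b) (x * c) (x * d)"
  by (rule eq_matI) (auto simp: mat2_def)

lemma mat2_eq_iff: "mat2 a b c d = mat2 a' b' c' d' \<longleftrightarrow> a = a' \<and> b = b' \<and> c = c' \<and> d = d'"
  by (metis index_mat2)

lemma sigma_eq_mat2:
  "sigma 1 = mat2 0 1 1 0" "sigma 2 = mat2 0 (-\<i>) \<i> 0" "sigma 3 = mat2 1 0 0 (-1)"
  by (rule eq_matI; auto simp: sigma_def mat2_def mat_of_rows_list_def less_2_cases)+

lemma one_mat_2_eq_mat2: "1\<^sub>m 2 = mat2 1 0 0 1"
  by (rule eq_matI) (auto simp: mat2_def less_2_cases)

lemma proj_eq_mat2: "proj0 = mat2 1 0 0 0" "proj1 = mat2 0 0 0 1"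
  by (rule eq_matI; auto simp: proj0_def proj1_def mat2_def mat_of_rows_list_def less_2_cases)+

lemma Wgate_eq_mat2: "Wgate b = mat2 (cos b) (- sin b) (sin b) (cos b)"
  by (simp add: Wgate_def sigma_eq_mat2 one_mat_2_eq_mat2 mat2_eq_iff algebra_simps)

lemma Wgate_carrier_mat [simp]: "Wgate b \<in> carrier_mat 2 2"
  by (simp add: Wgate_eq_mat2)

lemma sigma_carrier_mat [simp]: "sigma a \<in> carrier_mat 2 2"
  unfolding sigma_def mat_of_rows_list_def carrier_mat_def by simp

lemma Wgate_unitary: "dagger (Wgate b) * Wgate b = 1\<^sub>m 2"
proof -
  have "sin b * sin b + cos b * cos b = 1"
    using sin_cos_squared_add[of b] by (simp add: power2_eq_square)
  then show ?thesis
    by (simp add: Wgate_eq_mat2 one_mat_2_eq_mat2 mat2_eq_iff flip: of_real_mult of_real_add)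
qed

lemma cos_sin_double: "cos (2 * x) = cos x * cos x - sin x * sin x" "sin (2 * x) = 2 * sin x * cos x" for x :: real
  by (simp_all add: cos_double sin_double power2_eq_square)

lemma Wgate_sandwich_sigma3:
  "dagger (Wgate b) * sigma 3 * Wgate b = of_real (cos (2*b)) \<cdot>\<^sub>m sigma 3 + of_real (- sin (2*b)) \<cdot>\<^sub>m sigma 1"
  unfolding Wgate_eq_mat2 sigma_eq_mat2 cos_sin_double
  by (simp add: mat2_eq_iff algebra_simps)

lemma Wgate_sandwich_sigma1:
  "dagger (Wgate b) * sigma 1 * Wgate b = of_real (sin (2*b)) \<cdot>\<^sub>m sigma 3 + of_real (cos (2*b)) \<cdot>\<^sub>m sigma 1"
  unfolding Wgate_eq_mat2 sigma_eq_mat2 cos_sin_double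
  by (simp add: mat2_eq_iff algebra_simps)

section \<open>Tensor products of single-qubit operators\<close>

lemma qbit_less_2 [simp]: "qbit n k i < 2" "qbit n k i < Suc (Suc 0)"
  by (simp_all add: qbit_def)

lemma qbit_Suc_last: "qbit (Suc n) (Suc n) i = i mod 2"
  by (simp add: qbit_def)

lemma qbit_Suc: "k \<le> n \<Longrightarrow> qbit (Suc n) k i = qbit n k (i div 2)"
  by (simp add: qbit_def Suc_diff_le div_mult2_eq)

lemma sum_lessThan_double: "(\<Sum>i<2 * N. g i) = (\<Sum>i<N. g (2 * i) + g (2 * i + 1))"
  for g :: "nat \<Rightarrow> 'a::comm_monoid_add"
  by (induction N) (auto simp: ac_simps)

lemma sum_prod_qbit:
  fixes f :: "nat \<Rightarrow> nat \<Rightarrow> 'a::comm_semiring_1"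
  shows "(\<Sum>i<2^n. \<Prod>k\<in>{1..n}. f k (qbit n k i)) = (\<Prod>k\<in>{1..n}. f k 0 + f k 1)"
proof (induction n arbitrary: f)
  case 0
  then show ?case by simp
next
  case (Suc n)
  have split: "(\<Prod>k\<in>{1..Suc n}. f k (qbit (Suc n) k (2 * i + r)))
      = (\<Prod>k\<in>{1..n}. f k (qbit n k i)) * f (Suc n) r" if "r < 2" for i r
  proof -
    have "(\<Prod>k\<in>{1..Suc n}. f k (qbit (Suc n) k (2 * i + r)))
        = (\<Prod>k\<in>{1..n}. f k (qbit (Suc n) k (2 * i + r))) * f (Suc n) (qbit (Suc n) (Suc n) (2 * i + r))"
      by (simp add: prod.cl_ivl_Suc)
    also have "(\<Prod>k\<in>{1..n}. f k (qbit (Suc n) k (2 * i + r))) = (\<Prod>k\<in>{1..n}. f k (qbit n k i))"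
      using that by (intro prod.cong) (auto simp: qbit_Suc)
    also have "qbit (Suc n) (Suc n) (2 * i + r) = r"
      using that by (simp add: qbit_Suc_last)
    finally show ?thesis .
  qed
  have "(\<Sum>i<2^Suc n. \<Prod>k\<in>{1..Suc n}. f k (qbit (Suc n) k i))
      = (\<Sum>i<2^n. (\<Prod>k\<in>{1..Suc n}. f k (qbit (Suc n) k (2 * i)))
                   + (\<Prod>k\<in>{1..Suc n}. f k (qbit (Suc n) k (2 * i + 1))))"
    by (simp add: sum_lessThan_double)
  also have "\<dots> = (\<Sum>i<2^n. (\<Prod>k\<in>{1..n}. f k (qbit n k i)) * (f (Suc n) 0 + f (Suc n) 1))"
    using split[of 0] split[of 1] by (simp add: distrib_left)
  also have "\<dots> = (\<Prod>k\<in>{1..n}. f k 0 + f k 1) * (f (Suc n) 0 + f (Suc n) 1)"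
    by (metis (no_types) Suc.IH sum_distrib_right)
  also have "\<dots> = (\<Prod>k\<in>{1..Suc n}. f k 0 + f k 1)"
    by (simp add: prod.cl_ivl_Suc)
  finally show ?case .
qed

lemma qbit_eqD:
  assumes "i < 2^n" "j < 2^n" "\<And>k. k \<in> {1..n} \<Longrightarrow> qbit n k i = qbit n k j"
  shows "i = j"
  using assms
proof (induction n arbitrary: i j)
  case 0
  then show ?case by simp
next
  case (Suc n)
  have "i div 2 = j div 2"
  proof (rule Suc.IH)
    fix k assume "k \<in> {1..n}"
    then show "qbit n k (i div 2) = qbit n k (j div 2)"
      using Suc.prems(3)[of k] by (simp add: qbit_Suc)
  qed (use Suc.prems(1,2) in auto)
  moreover have "i mod 2 = j mod 2"
    using Suc.prems(3)[of "Suc n"] by (simp add: qbit_Suc_last)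
  ultimately show ?case by (metis div_mult_mod_eq)
qed

lemma tensor_op_carrier_mat [simp]:
  "tensor_op n G \<in> carrier_mat (2^n) (2^n)"
  "dim_row (tensor_op n G) = 2^n" "dim_col (tensor_op n G) = 2^n"
  by (simp_all add: tensor_op_def)

lemma index_tensor_op:
  "i < 2^n \<Longrightarrow> j < 2^n \<Longrightarrow> tensor_op n G $$ (i, j) = (\<Prod>k\<in>{1..n}. G k $$ (qbit n k i, qbit n k j))"
  by (simp add: tensor_op_def)

lemma tensor_op_cong: "(\<And>k. k \<in> {1..n} \<Longrightarrow> G k = H k) \<Longrightarrow> tensor_op n G = tensor_op n H"
  unfolding tensor_op_def by (intro eq_matI) (auto intro!: prod.cong)

lemma tensor_op_mult:
  assumes "\<And>k. k \<in> {1..n} \<Longrightarrow> G k \<in> carrier_mat 2 2 \<and> H k \<in> carrier_mat 2 2"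
  shows "tensor_op n G * tensor_op n H = tensor_op n (\<lambda>k. G k * H k)"
proof (rule eq_matI)
  fix i j assume "i < dim_row (tensor_op n (\<lambda>k. G k * H k))" "j < dim_col (tensor_op n (\<lambda>k. G k * H k))"
  then have ij: "i < 2^n" "j < 2^n" by auto
  have "(tensor_op n G * tensor_op n H) $$ (i, j)
      = (\<Sum>m<2^n. \<Prod>k\<in>{1..n}. G k $$ (qbit n k i, qbit n k m) * H k $$ (qbit n k m, qbit n k j))"
    using ij by (auto simp: index_mult_mat_sum[of _ "2^n" "2^n" _ "2^n"] index_tensor_op prod.distrib
        simp del: index_mult_mat(1))
  also have "\<dots> = (\<Prod>k\<in>{1..n}. G k $$ (qbit n k i, 0) * H k $$ (0, qbit n k j)
                              + G k $$ (qbit n k i, 1) * H k $$ (1, qbit n k j))"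
    by (rule sum_prod_qbit)
  also have "\<dots> = (\<Prod>k\<in>{1..n}. (G k * H k) $$ (qbit n k i, qbit n k j))"
    using assms by (intro prod.cong refl) (simp add: index_mult_mat_sum[of _ 2 2 _ 2] numeral_2_eq_2)
  finally show "(tensor_op n G * tensor_op n H) $$ (i, j) = tensor_op n (\<lambda>k. G k * H k) $$ (i, j)"
    using ij by (simp add: index_tensor_op)
qed auto

lemma tensor_op_dagger:
  assumes "\<And>k. k \<in> {1..n} \<Longrightarrow> G k \<in> carrier_mat 2 2"
  shows "dagger (tensor_op n G) = tensor_op n (\<lambda>k. dagger (G k))"
proof (rule eq_matI)
  fix i j assume "i < dim_row (tensor_op n (\<lambda>k. dagger (G k)))" "j < dim_col (tensor_op n (\<lambda>k. dagger (G k)))"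
  then have "i < 2^n" "j < 2^n" by auto
  moreover have "dagger (G k) $$ (qbit n k i, qbit n k j) = cnj (G k $$ (qbit n k j, qbit n k i))"
    if "k \<in> {1..n}" for k
    using assms[OF that] by (simp add: index_dagger)
  ultimately show "dagger (tensor_op n G) $$ (i, j) = tensor_op n (\<lambda>k. dagger (G k)) $$ (i, j)"
    by (auto simp: index_tensor_op index_dagger intro!: prod.cong)
qed auto

lemma mtrace_tensor_op: "mtrace (tensor_op n G) = (\<Prod>k\<in>{1..n}. G k $$ (0, 0) + G k $$ (1, 1))"
  using sum_prod_qbit[of "\<lambda>k b. G k $$ (b, b)" n] by (simp add: mtrace_def index_tensor_op)

section \<open>Diagonal gates\<close>

definition diag_of :: "nat \<Rightarrow> (nat \<Rightarrow> complex) \<Rightarrow> complex mat" where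
  "diag_of N s = mat N N (\<lambda>(i, j). if i = j then s i else 0)"

definition sign_diag :: "nat \<Rightarrow> complex mat \<Rightarrow> bool" where
  "sign_diag N D \<longleftrightarrow> (\<exists>s. (\<forall>i. s i = 1 \<or> s i = -1) \<and> D = diag_of N s)"

lemma diag_of_carrier_mat [simp]: "diag_of N s \<in> carrier_mat N N"
  by (simp add: diag_of_def)

lemma diag_of_mult: "diag_of N s * diag_of N t = diag_of N (\<lambda>i. s i * t i)"
proof (rule eq_matI)
  fix i j assume "i < dim_row (diag_of N (\<lambda>i. s i * t i))" "j < dim_col (diag_of N (\<lambda>i. s i * t i))"
  then have ij: "i < N" "j < N" by (auto simp: diag_of_def)
  have "(diag_of N s * diag_of N t) $$ (i, j) = (\<Sum>m<N. (if i = m then s i else 0) * (if m = j then t m else 0))"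
    using ij by (simp add: index_mult_mat_sum[of _ N N _ N] diag_of_def del: index_mult_mat(1))
  also have "\<dots> = (\<Sum>m<N. if m = i then (if i = j then s i * t i else 0) else 0)"
    by (intro sum.cong) auto
  finally show "(diag_of N s * diag_of N t) $$ (i, j) = diag_of N (\<lambda>i. s i * t i) $$ (i, j)"
    using ij by (simp add: diag_of_def)
qed (auto simp: diag_of_def)

lemma dagger_diag_of: "dagger (diag_of N s) = diag_of N (\<lambda>i. cnj (s i))"
  by (rule eq_matI) (auto simp: dagger_def diag_of_def)

lemma sign_diag_carrier_mat: "sign_diag N D \<Longrightarrow> D \<in> carrier_mat N N"
  by (auto simp: sign_diag_def)

lemma sign_diag_one: "sign_diag N (1\<^sub>m N)"
proof -
  have "1\<^sub>m N = diag_of N (\<lambda>_. 1)"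
    by (simp add: diag_of_def one_mat_def)
  then show ?thesis
    unfolding sign_diag_def by (intro exI[of _ "\<lambda>_. 1"]) simp
qed

lemma sign_diag_mult:
  assumes "sign_diag N A" "sign_diag N B"
  shows "sign_diag N (A * B)"
proof -
  obtain s where s: "\<forall>i. s i = 1 \<or> s i = -1" "A = diag_of N s"
    using assms(1) unfolding sign_diag_def by blast
  obtain t where t: "\<forall>i. t i = 1 \<or> t i = -1" "B = diag_of N t"
    using assms(2) unfolding sign_diag_def by blast
  have "s i * t i = 1 \<or> s i * t i = -1" for i
    using s(1)[rule_format, of i] t(1)[rule_format, of i] by auto
  moreover have "A * B = diag_of N (\<lambda>i. s i * t i)"
    by (simp add: s(2) t(2) diag_of_mult)
  ultimately show ?thesis
    unfolding sign_diag_def by (intro exI[of _ "\<lambda>i. s i * t i"]) simp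
qed

lemma sign_diag_unitary:
  assumes "sign_diag N D"
  shows "dagger D * D = 1\<^sub>m N"
proof -
  obtain s where s: "\<forall>i. s i = 1 \<or> s i = -1" "D = diag_of N s"
    using assms unfolding sign_diag_def by blast
  have "cnj (s i) * s i = 1" for i
    using s(1)[rule_format, of i] by auto
  then show ?thesis
    unfolding s(2) dagger_diag_of diag_of_mult by (simp add: diag_of_def one_mat_def)
qed

lemma tensor_op_diag:
  "tensor_op n (\<lambda>k. mat2 (g k 0) 0 0 (g k 1)) = diag_of (2^n) (\<lambda>i. \<Prod>k\<in>{1..n}. g k (qbit n k i))"
proof (rule eq_matI)
  fix i j assume "i < dim_row (diag_of (2^n) (\<lambda>i. \<Prod>k\<in>{1..n}. g k (qbit n k i)))"
    "j < dim_col (diag_of (2^n) (\<lambda>i. \<Prod>k\<in>{1..n}. g k (qbit n k i)))"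
  then have ij: "i < 2^n" "j < 2^n" by (auto simp: diag_of_def)
  have entry: "mat2 (g k 0) 0 0 (g k 1) $$ (b, c) = (if b = c then g k b else 0)"
    if "b < 2" "c < 2" for k b c
    using that by (auto simp: less_2_cases)
  show "tensor_op n (\<lambda>k. mat2 (g k 0) 0 0 (g k 1)) $$ (i, j)
      = diag_of (2^n) (\<lambda>i. \<Prod>k\<in>{1..n}. g k (qbit n k i)) $$ (i, j)"
  proof (cases "i = j")
    case False
    then obtain k where k: "k \<in> {1..n}" "qbit n k i \<noteq> qbit n k j"
      using qbit_eqD[OF ij] by blast
    then have "(\<Prod>k\<in>{1..n}. mat2 (g k 0) 0 0 (g k 1) $$ (qbit n k i, qbit n k j)) = 0"
      by (intro prod_zero bexI[of _ k]) (simp_all add: entry k del: One_nat_def)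
    then show ?thesis
      using ij False by (simp add: index_tensor_op diag_of_def)
  qed (use ij in \<open>simp add: index_tensor_op entry diag_of_def del: One_nat_def\<close>)
qed (auto simp: diag_of_def)

lemma diag_of_add: "diag_of N s + diag_of N t = diag_of N (\<lambda>i. s i + t i)"
  by (rule eq_matI) (auto simp: diag_of_def)

lemma sign_diag_CZ:
  assumes "a \<in> {1..n}" "b \<in> {1..n}" "a \<noteq> b"
  shows "sign_diag (2^n) (CZ n a b)"
proof -
  define g1 where "g1 k x = (if k = a then (if x = 0 then 1 else 0) else (1::complex))" for k x :: nat
  define g2 where "g2 k x = (if k = a then (if x = 0 then 0 else 1) else (1::complex))
                           * (if k = b then (if x = 0 then 1 else -1) else 1)" for k x :: nat
  have factors: "(\<lambda>k. if k = a then proj0 else 1\<^sub>m 2) = (\<lambda>k. mat2 (g1 k 0) 0 0 (g1 k 1))"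
    "(\<lambda>k. if k = a then proj1 else if k = b then sigma 3 else 1\<^sub>m 2) = (\<lambda>k. mat2 (g2 k 0) 0 0 (g2 k 1))"
    using assms(3) by (auto simp: g1_def g2_def proj_eq_mat2 one_mat_2_eq_mat2 sigma_eq_mat2)
  have CZ_eq: "CZ n a b = diag_of (2^n)
      (\<lambda>i. (\<Prod>k\<in>{1..n}. g1 k (qbit n k i)) + (\<Prod>k\<in>{1..n}. g2 k (qbit n k i)))"
    unfolding CZ_def factors tensor_op_diag diag_of_add ..
  have "(\<Prod>k\<in>{1..n}. g1 k (qbit n k i)) = (if qbit n a i = 0 then 1 else 0)"
    "(\<Prod>k\<in>{1..n}. g2 k (qbit n k i))
       = (if qbit n a i = 0 then 0 else 1) * (if qbit n b i = 0 then 1 else -1)" for i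
    unfolding g1_def g2_def prod.distrib prod.delta[OF finite_atLeastAtMost] using assms(1,2) by simp_all
  then have "(\<Prod>k\<in>{1..n}. g1 k (qbit n k i)) + (\<Prod>k\<in>{1..n}. g2 k (qbit n k i))
      = (if qbit n a i = 0 then 1 else if qbit n b i = 0 then 1 else -1)" for i
    by simp
  then show ?thesis
    unfolding sign_diag_def CZ_eq by (intro exI[of _ "\<lambda>i. if qbit n a i = 0 then 1 else if qbit n b i = 0 then 1 else -1"]) auto
qed

lemma sign_diag_foldr_mult:
  "sign_diag N B \<Longrightarrow> (\<And>m. m \<in> set xs \<Longrightarrow> sign_diag N (f m)) \<Longrightarrow> sign_diag N (foldr (\<lambda>m A. f m * A) xs B)"
  by (induction xs) (auto intro: sign_diag_mult)

lemma sign_diag_CZ1: "n \<ge> 2 \<Longrightarrow> sign_diag (2^n) (CZ1 n)"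
  unfolding CZ1_def by (rule sign_diag_foldr_mult[OF sign_diag_one]) (auto intro!: sign_diag_CZ)

lemma sign_diag_CZ2: "n \<ge> 2 \<Longrightarrow> sign_diag (2^n) (CZ2 n)"
  unfolding CZ2_def by (rule sign_diag_foldr_mult) (auto intro!: sign_diag_CZ)

section \<open>Observables on the first qubit\<close>

definition qubit1_op :: "nat \<Rightarrow> complex mat \<Rightarrow> complex mat" where
  "qubit1_op n P = tensor_op n (\<lambda>k. if k = 1 then P else 1\<^sub>m 2)"

definition expval :: "nat \<Rightarrow> complex mat \<Rightarrow> complex mat \<Rightarrow> real" where
  "expval n P S = Re (mtrace (qubit1_op n P * S))"

lemma alpha_eq_expval: "alpha n \<rho> = (expval n (sigma 1) \<rho>)\<^sup>2 + (expval n (sigma 3) \<rho>)\<^sup>2"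
  unfolding alpha_def expval_def qubit1_op_def ..

lemma qubit1_op_carrier_mat [simp]:
  "qubit1_op n P \<in> carrier_mat (2^n) (2^n)" "dim_row (qubit1_op n P) = 2^n" "dim_col (qubit1_op n P) = 2^n"
  by (simp_all add: qubit1_op_def)

lemma qubit1_op_lincomb:
  assumes "n \<ge> 1" "Q \<in> carrier_mat 2 2" "R \<in> carrier_mat 2 2"
  shows "qubit1_op n (c \<cdot>\<^sub>m Q + d \<cdot>\<^sub>m R) = c \<cdot>\<^sub>m qubit1_op n Q + d \<cdot>\<^sub>m qubit1_op n R"
proof (rule eq_matI)
  fix i j assume "i < dim_row (c \<cdot>\<^sub>m qubit1_op n Q + d \<cdot>\<^sub>m qubit1_op n R)"
    "j < dim_col (c \<cdot>\<^sub>m qubit1_op n Q + d \<cdot>\<^sub>m qubit1_op n R)"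
  then have ij: "i < 2^n" "j < 2^n" by auto
  define rest where "rest = (\<Prod>k\<in>{1..n} - {1}. 1\<^sub>m 2 $$ (qbit n k i, qbit n k j) :: complex)"
  have factor: "qubit1_op n P $$ (i, j) = P $$ (qbit n 1 i, qbit n 1 j) * rest" for P
  proof -
    have "qubit1_op n P $$ (i, j)
        = (if (1::nat) = 1 then P else 1\<^sub>m 2) $$ (qbit n 1 i, qbit n 1 j)
          * (\<Prod>k\<in>{1..n} - {1}. (if k = 1 then P else 1\<^sub>m 2) $$ (qbit n k i, qbit n k j))"
      unfolding qubit1_op_def index_tensor_op[OF ij] using assms(1) by (intro prod.remove) auto
    also have "(\<Prod>k\<in>{1..n} - {1}. (if k = 1 then P else 1\<^sub>m 2) $$ (qbit n k i, qbit n k j)) = rest"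
      unfolding rest_def by (intro prod.cong) auto
    finally show ?thesis by simp
  qed
  have "dim_row Q = 2" "dim_col Q = 2" "dim_row R = 2" "dim_col R = 2"
    using assms(2,3) by auto
  then show "qubit1_op n (c \<cdot>\<^sub>m Q + d \<cdot>\<^sub>m R) $$ (i, j) = (c \<cdot>\<^sub>m qubit1_op n Q + d \<cdot>\<^sub>m qubit1_op n R) $$ (i, j)"
    using ij by (simp add: factor distrib_right mult.assoc)
qed (simp_all add: qubit1_op_def)

lemma expval_lincomb:
  assumes "n \<ge> 1" "Q \<in> carrier_mat 2 2" "R \<in> carrier_mat 2 2" "S \<in> carrier_mat (2^n) (2^n)"
  shows "expval n (of_real c \<cdot>\<^sub>m Q + of_real d \<cdot>\<^sub>m R) S = c * expval n Q S + d * expval n R S"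
  unfolding expval_def qubit1_op_lincomb[OF assms(1-3)]
  using assms(4) by (simp add: mtrace_lincomb_mult[of _ "2^n"])

lemma Vlayer_carrier_mat [simp]: "Vlayer n \<beta> j \<in> carrier_mat (2^n) (2^n)"
  by (simp add: Vlayer_def)

lemma Vlayer_sandwich_qubit1_op:
  assumes "P \<in> carrier_mat 2 2"
  shows "dagger (Vlayer n \<beta> j) * qubit1_op n P * Vlayer n \<beta> j
       = qubit1_op n (dagger (Wgate (\<beta> j 1)) * P * Wgate (\<beta> j 1))"
proof -
  have "dagger (Vlayer n \<beta> j) * qubit1_op n P * Vlayer n \<beta> j
      = tensor_op n (\<lambda>k. dagger (Wgate (\<beta> j k)) * (if k = 1 then P else 1\<^sub>m 2) * Wgate (\<beta> j k))"
    using assms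
    by (simp add: Vlayer_def qubit1_op_def tensor_op_dagger tensor_op_mult mult_carrier_mat[of _ 2 2 _ 2])
  also have "\<dots> = qubit1_op n (dagger (Wgate (\<beta> j 1)) * P * Wgate (\<beta> j 1))"
    unfolding qubit1_op_def
    by (intro tensor_op_cong) (simp add: Wgate_unitary right_mult_one_mat[of _ 2 2])
  finally show ?thesis .
qed

lemma expval_sandwich:
  "A \<in> carrier_mat (2^n) (2^n) \<Longrightarrow> S \<in> carrier_mat (2^n) (2^n) \<Longrightarrow>
    expval n P (sandwich A S) = Re (mtrace (dagger A * qubit1_op n P * A * S))"
  by (simp add: expval_def mtrace_mult_sandwich[of _ "2^n"])

lemma expval_sandwich_Vlayer:
  "P \<in> carrier_mat 2 2 \<Longrightarrow> S \<in> carrier_mat (2^n) (2^n) \<Longrightarrow>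
    expval n P (sandwich (Vlayer n \<beta> j) S) = expval n (dagger (Wgate (\<beta> j 1)) * P * Wgate (\<beta> j 1)) S"
  by (subst expval_sandwich) (simp_all add: Vlayer_sandwich_qubit1_op expval_def)

lemma expval_sigma3_sandwich_Vlayer:
  assumes "n \<ge> 1" "S \<in> carrier_mat (2^n) (2^n)"
  shows "expval n (sigma 3) (sandwich (Vlayer n \<beta> j) S)
       = cos (2 * \<beta> j 1) * expval n (sigma 3) S - sin (2 * \<beta> j 1) * expval n (sigma 1) S"
proof -
  have "expval n (sigma 3) (sandwich (Vlayer n \<beta> j) S)
      = cos (2 * \<beta> j 1) * expval n (sigma 3) S + (- sin (2 * \<beta> j 1)) * expval n (sigma 1) S"
    unfolding expval_sandwich_Vlayer[OF sigma_carrier_mat assms(2)] Wgate_sandwich_sigma3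
    using assms by (intro expval_lincomb) auto
  then show ?thesis by simp
qed

lemma expval_sigma1_sandwich_Vlayer:
  assumes "n \<ge> 1" "S \<in> carrier_mat (2^n) (2^n)"
  shows "expval n (sigma 1) (sandwich (Vlayer n \<beta> j) S)
       = sin (2 * \<beta> j 1) * expval n (sigma 3) S + cos (2 * \<beta> j 1) * expval n (sigma 1) S"
  unfolding expval_sandwich_Vlayer[OF sigma_carrier_mat assms(2)] Wgate_sandwich_sigma1
  using assms by (intro expval_lincomb) auto

lemma qubit1_op_sigma3_diag: "\<exists>z. qubit1_op n (sigma 3) = diag_of (2^n) z"
proof -
  define g where "g k x = (if x = 1 \<and> k = 1 then -1 else 1 :: complex)" for k x :: nat
  have "qubit1_op n (sigma 3) = tensor_op n (\<lambda>k. mat2 (g k 0) 0 0 (g k 1))"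
    unfolding qubit1_op_def g_def by (intro tensor_op_cong) (simp add: sigma_eq_mat2 one_mat_2_eq_mat2)
  then show ?thesis
    unfolding tensor_op_diag by blast
qed

lemma expval_sigma3_sandwich_sign_diag:
  assumes "sign_diag (2^n) D" "S \<in> carrier_mat (2^n) (2^n)"
  shows "expval n (sigma 3) (sandwich D S) = expval n (sigma 3) S"
proof -
  obtain z where z: "qubit1_op n (sigma 3) = diag_of (2^n) z"
    using qubit1_op_sigma3_diag by blast
  obtain s where D: "D = diag_of (2^n) s"
    using assms(1) unfolding sign_diag_def by blast
  have "dagger D * qubit1_op n (sigma 3) * D = dagger D * D * qubit1_op n (sigma 3)"
    unfolding z D dagger_diag_of diag_of_mult by (simp only: ac_simps)
  also have "\<dots> = qubit1_op n (sigma 3)"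
    using sign_diag_unitary[OF assms(1)] by simp
  finally show ?thesis
    using assms sign_diag_carrier_mat by (simp add: expval_sandwich flip: expval_def)
qed

section \<open>The encoding circuit\<close>

lemma CZ1_carrier_mat [simp]: "n \<ge> 2 \<Longrightarrow> CZ1 n \<in> carrier_mat (2^n) (2^n)"
  by (rule sign_diag_carrier_mat[OF sign_diag_CZ1])

lemma CZ2_carrier_mat [simp]: "n \<ge> 2 \<Longrightarrow> CZ2 n \<in> carrier_mat (2^n) (2^n)"
  by (rule sign_diag_carrier_mat[OF sign_diag_CZ2])

lemma Ulayer_carrier_mat [simp]: "n \<ge> 2 \<Longrightarrow> Ulayer n \<beta> j \<in> carrier_mat (2^n) (2^n)"
  unfolding Ulayer_def by (auto intro!: mult_carrier_mat[of _ "2^n" "2^n" _ "2^n"])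

lemma layers_carrier_mat [simp]: "n \<ge> 2 \<Longrightarrow> layers n \<beta> l \<in> carrier_mat (2^n) (2^n)"
  by (induction l) (auto intro!: mult_carrier_mat[of _ "2^n" "2^n" _ "2^n"])

text \<open>The state after l layers; the initial X on every qubit has turned |0...0> into |1...1>.\<close>
definition circuit_state :: "nat \<Rightarrow> (nat \<Rightarrow> nat \<Rightarrow> real) \<Rightarrow> nat \<Rightarrow> complex mat" where
  "circuit_state n \<beta> l = sandwich (layers n \<beta> l) (tensor_op n (\<lambda>_. proj1))"

lemma circuit_state_carrier_mat [simp]: "n \<ge> 2 \<Longrightarrow> circuit_state n \<beta> l \<in> carrier_mat (2^n) (2^n)"
  by (simp add: circuit_state_def)

lemma circuit_state_Suc:
  assumes "n \<ge> 2"
  shows "circuit_state n \<beta> (Suc l) = sandwich (CZ1 n) (sandwich (Vlayer n \<beta> (2 * Suc l))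
           (sandwich (CZ2 n) (sandwich (Vlayer n \<beta> (2 * Suc l - 1)) (circuit_state n \<beta> l))))"
  using assms
  by (simp add: circuit_state_def Ulayer_def sandwich_mult[of _ "2^n"] mult_carrier_mat[of _ "2^n" "2^n" _ "2^n"])

lemma sandwich_sigma1_proj0: "sandwich (tensor_op n (\<lambda>_. sigma 1)) (tensor_op n (\<lambda>_. proj0)) = tensor_op n (\<lambda>_. proj1)"
  unfolding sandwich_def sigma_eq_mat2 proj_eq_mat2
  by (simp add: tensor_op_dagger tensor_op_mult mult_carrier_mat[of _ 2 2 _ 2])

lemma rho_in_eq_sandwich:
  assumes "n \<ge> 2"
  shows "rho_in n L \<beta> = sandwich (Vlayer n \<beta> (2 * L + 1)) (circuit_state n \<beta> L)"
proof -
  have "rho_in n L \<beta>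
      = sandwich (Vlayer n \<beta> (2 * L + 1) * layers n \<beta> L * tensor_op n (\<lambda>_. sigma 1)) (tensor_op n (\<lambda>_. proj0))"
    unfolding rho_in_def Ucirc_def sandwich_def ..
  also have "\<dots> = sandwich (Vlayer n \<beta> (2 * L + 1)) (sandwich (layers n \<beta> L)
                     (sandwich (tensor_op n (\<lambda>_. sigma 1)) (tensor_op n (\<lambda>_. proj0))))"
    using assms by (simp add: sandwich_mult[of _ "2^n"] mult_carrier_mat[of _ "2^n" "2^n" _ "2^n"])
  finally show ?thesis
    unfolding sandwich_sigma1_proj0 circuit_state_def .
qed

lemma expval_sigma3_proj1:
  assumes "n \<ge> 1"
  shows "expval n (sigma 3) (tensor_op n (\<lambda>_. proj1)) = -1"
proof -
  have "qubit1_op n (sigma 3) * tensor_op n (\<lambda>_. proj1)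
      = tensor_op n (\<lambda>k. if k = 1 then mat2 0 0 0 (-1) else mat2 0 0 0 1)"
    unfolding qubit1_op_def
    by (subst tensor_op_mult) (auto simp: sigma_eq_mat2 one_mat_2_eq_mat2 proj_eq_mat2 intro!: tensor_op_cong)
  then have "mtrace (qubit1_op n (sigma 3) * tensor_op n (\<lambda>_. proj1)) = (\<Prod>k\<in>{1..n}. if k = 1 then -1 else 1)"
    by (simp add: mtrace_tensor_op if_distrib[of "\<lambda>M. M $$ _"] cong: if_cong)
  then show ?thesis
    using assms by (simp add: expval_def)
qed

lemma layers_cong: "(\<And>j. j \<le> 2 * l \<Longrightarrow> \<beta> j = \<beta>' j) \<Longrightarrow> layers n \<beta> l = layers n \<beta>' l"
  by (induction l) (simp_all add: Ulayer_def Vlayer_def)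

lemma circuit_state_cong: "(\<And>j. j \<le> 2 * l \<Longrightarrow> \<beta> j = \<beta>' j) \<Longrightarrow> circuit_state n \<beta> l = circuit_state n \<beta>' l"
  unfolding circuit_state_def using layers_cong by metis

lemma rotation_sq_sum: "(sin t * a + cos t * b)\<^sup>2 + (cos t * a - sin t * b)\<^sup>2 = a\<^sup>2 + b\<^sup>2" for t a b :: real
proof -
  have "(x * a + y * b)\<^sup>2 + (y * a - x * b)\<^sup>2 = (x\<^sup>2 + y\<^sup>2) * (a\<^sup>2 + b\<^sup>2)" for x y :: real
    by (simp add: power2_eq_square algebra_simps)
  then show ?thesis
    by (metis sin_cos_squared_add mult_1)
qed

lemma alpha_rho_in:
  assumes "n \<ge> 2"
  shows "alpha n (rho_in n L \<beta>)
       = (expval n (sigma 1) (circuit_state n \<beta> L))\<^sup>2 + (expval n (sigma 3) (circuit_state n \<beta> L))\<^sup>2"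
proof -
  have n: "n \<ge> 1" and S: "circuit_state n \<beta> L \<in> carrier_mat (2^n) (2^n)"
    using assms by auto
  show ?thesis
    unfolding alpha_eq_expval rho_in_eq_sandwich[OF assms]
      expval_sigma1_sandwich_Vlayer[OF n S] expval_sigma3_sandwich_Vlayer[OF n S]
    by (subst rotation_sq_sum) (rule add.commute)
qed

section \<open>Averaging over a uniformly distributed rotation angle\<close>

definition uniform_angle :: "real measure" where
  "uniform_angle = uniform_measure lborel {0..2 * pi}"

lemma sets_uniform_angle [simp, measurable_cong]: "sets uniform_angle = sets borel"
  by (simp add: uniform_angle_def)

lemma prob_space_uniform_angle: "prob_space uniform_angle"
  unfolding uniform_angle_def by (rule prob_space_uniform_measure) auto

lemma has_integral_rotated_sq:
  fixes a b :: real
  shows "((\<lambda>y. (cos (2 * y) * a - sin (2 * y) * b)\<^sup>2) has_integral pi * (a\<^sup>2 + b\<^sup>2)) {0..2 * pi}"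
proof -
  define f where "f y = (a\<^sup>2 + b\<^sup>2) / 2 + (a\<^sup>2 - b\<^sup>2) / 2 * cos (4 * y) - a * b * sin (4 * y)" for y
  define G where "G y = (a\<^sup>2 + b\<^sup>2) / 2 * y + (a\<^sup>2 - b\<^sup>2) / 8 * sin (4 * y) + a * b / 4 * cos (4 * y)" for y
  have integrand: "(cos (2 * y) * a - sin (2 * y) * b)\<^sup>2 = f y" for y
  proof -
    have expand: "(u * a - v * b)\<^sup>2 = (a\<^sup>2 + b\<^sup>2) / 2 * (v * v + u * u)
        + (a\<^sup>2 - b\<^sup>2) / 2 * (u * u - v * v) - a * b * (2 * v * u)" for u v :: real
      by (simp add: power2_eq_square field_simps)
    have "sin (2 * y) * sin (2 * y) + cos (2 * y) * cos (2 * y) = 1"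
      using sin_cos_squared_add[of "2 * y"] by (simp add: power2_eq_square)
    then show ?thesis
      using cos_sin_double[of "2 * y"] by (simp add: f_def expand)
  qed
  have "(f has_integral G (2 * pi) - G 0) {0..2 * pi}"
  proof (rule fundamental_theorem_of_calculus)
    fix y :: real
    have "(G has_real_derivative f y) (at y)"
      unfolding G_def f_def by (auto intro!: derivative_eq_intros simp: field_simps)
    then show "(G has_vector_derivative f y) (at y within {0..2 * pi})"
      by (simp add: has_real_derivative_iff_has_vector_derivative has_vector_derivative_at_within)
  qed simp
  moreover have "G (2 * pi) - G 0 = pi * (a\<^sup>2 + b\<^sup>2)"
  proof -
    have "sin (4 * (2 * pi)) = 0" "cos (4 * (2 * pi)) = 1"
      using sin_npi[of 8] cos_npi[of 8] by (simp_all add: mult.assoc)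
    then show ?thesis by (simp add: G_def algebra_simps)
  qed
  ultimately show ?thesis
    by (simp add: integrand[abs_def])
qed

lemma nn_integral_uniform_angle_rotated_sq:
  fixes a b :: real
  shows "(\<integral>\<^sup>+y. ennreal ((cos (2 * y) * a - sin (2 * y) * b)\<^sup>2) \<partial>uniform_angle) = ennreal ((a\<^sup>2 + b\<^sup>2) / 2)"
proof -
  have "(\<integral>\<^sup>+y. ennreal ((cos (2 * y) * a - sin (2 * y) * b)\<^sup>2) \<partial>uniform_angle)
      = (\<integral>\<^sup>+y. ennreal ((cos (2 * y) * a - sin (2 * y) * b)\<^sup>2) * indicator {0..2 * pi} y \<partial>lborel)
        / emeasure lborel {0..2 * pi}"
    unfolding uniform_angle_def by (rule nn_integral_uniform_measure) auto
  also have "(\<integral>\<^sup>+y. ennreal ((cos (2 * y) * a - sin (2 * y) * b)\<^sup>2) * indicator {0..2 * pi} y \<partial>lborel)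
      = ennreal (pi * (a\<^sup>2 + b\<^sup>2))"
    by (rule nn_integral_has_integral_lebesgue'[OF _ has_integral_rotated_sq]) simp
  also have "ennreal (pi * (a\<^sup>2 + b\<^sup>2)) / emeasure lborel {0..2 * pi} = ennreal ((a\<^sup>2 + b\<^sup>2) / 2)"
    by (simp add: divide_ennreal)
  finally show ?thesis .
qed

lemma product_sigma_finite_uniform_angle: "product_sigma_finite (\<lambda>_. uniform_angle)"
  unfolding product_sigma_finite_def using prob_space_uniform_angle prob_space_imp_sigma_finite by blast

lemma nn_integral_PiM_rotated_sq:
  fixes A B :: "('i \<Rightarrow> real) \<Rightarrow> real"
  assumes "finite I" "i \<in> I"
    and [measurable]: "A \<in> borel_measurable (PiM I (\<lambda>_. uniform_angle))" "B \<in> borel_measurable (PiM I (\<lambda>_. uniform_angle))"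
    and "\<And>x y. A (x(i := y)) = A x" "\<And>x y. B (x(i := y)) = B x"
  shows "(\<integral>\<^sup>+x. ennreal ((cos (2 * x i) * A x - sin (2 * x i) * B x)\<^sup>2) \<partial>PiM I (\<lambda>_. uniform_angle))
       = (\<integral>\<^sup>+x. ennreal (((A x)\<^sup>2 + (B x)\<^sup>2) / 2) \<partial>PiM I (\<lambda>_. uniform_angle))"
    (is "integral\<^sup>N _ ?rot = integral\<^sup>N _ ?avg")
proof -
  define J where "J = I - {i}"
  have I: "I = insert i J" "finite J" "i \<notin> J"
    using assms(1,2) unfolding J_def by (simp_all add: insert_absorb)
  have [measurable]: "(\<lambda>x. x i) \<in> borel_measurable (PiM I (\<lambda>_. uniform_angle))"
    using measurable_component_singleton[OF assms(2), of "\<lambda>_. uniform_angle"]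
    unfolding measurable_cong_sets[OF refl sets_uniform_angle] .
  have meas_rot: "?rot \<in> borel_measurable (PiM I (\<lambda>_. uniform_angle))"
    by measurable
  have meas_avg: "?avg \<in> borel_measurable (PiM I (\<lambda>_. uniform_angle))"
    by measurable
  note fubini = product_sigma_finite.product_nn_integral_insert[OF product_sigma_finite_uniform_angle I(2,3)]
  have "integral\<^sup>N (PiM I (\<lambda>_. uniform_angle)) ?rot
      = (\<integral>\<^sup>+x. \<integral>\<^sup>+y. ennreal ((cos (2 * y) * A x - sin (2 * y) * B x)\<^sup>2) \<partial>uniform_angle \<partial>PiM J (\<lambda>_. uniform_angle))"
    unfolding I(1) fubini[OF meas_rot[unfolded I(1)]] by (simp add: assms(5,6))
  also have "\<dots> = (\<integral>\<^sup>+x. \<integral>\<^sup>+y. ?avg x \<partial>uniform_angle \<partial>PiM J (\<lambda>_. uniform_angle))"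
    by (simp add: nn_integral_uniform_angle_rotated_sq prob_space.emeasure_space_1[OF prob_space_uniform_angle])
  also have "\<dots> = integral\<^sup>N (PiM I (\<lambda>_. uniform_angle)) ?avg"
    unfolding I(1) fubini[OF meas_avg[unfolded I(1)]] by (simp add: assms(5,6))
  finally show ?thesis .
qed

lemma nn_integral_sq_le_rotated:
  fixes A B :: "('i \<Rightarrow> real) \<Rightarrow> real"
  assumes "finite I" "i \<in> I"
    and [measurable]: "A \<in> borel_measurable (PiM I (\<lambda>_. uniform_angle))" "B \<in> borel_measurable (PiM I (\<lambda>_. uniform_angle))"
    and "\<And>x y. A (x(i := y)) = A x" "\<And>x y. B (x(i := y)) = B x"
  shows "(\<integral>\<^sup>+x. ennreal ((A x)\<^sup>2) \<partial>PiM I (\<lambda>_. uniform_angle))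
       \<le> 2 * (\<integral>\<^sup>+x. ennreal ((cos (2 * x i) * A x - sin (2 * x i) * B x)\<^sup>2) \<partial>PiM I (\<lambda>_. uniform_angle))"
proof -
  have "(\<integral>\<^sup>+x. ennreal ((A x)\<^sup>2) \<partial>PiM I (\<lambda>_. uniform_angle))
      \<le> (\<integral>\<^sup>+x. 2 * ennreal (((A x)\<^sup>2 + (B x)\<^sup>2) / 2) \<partial>PiM I (\<lambda>_. uniform_angle))"
  proof (rule nn_integral_mono)
    fix x
    have "ennreal ((A x)\<^sup>2) \<le> ennreal (2 * (((A x)\<^sup>2 + (B x)\<^sup>2) / 2))"
      by (intro ennreal_leI) simp
    also have "\<dots> = 2 * ennreal (((A x)\<^sup>2 + (B x)\<^sup>2) / 2)"
      by (subst ennreal_mult) auto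
    finally show "ennreal ((A x)\<^sup>2) \<le> 2 * ennreal (((A x)\<^sup>2 + (B x)\<^sup>2) / 2)" .
  qed
  also have "\<dots> = 2 * (\<integral>\<^sup>+x. ennreal (((A x)\<^sup>2 + (B x)\<^sup>2) / 2) \<partial>PiM I (\<lambda>_. uniform_angle))"
    by (rule nn_integral_cmult) measurable
  finally show ?thesis
    by (simp only: nn_integral_PiM_rotated_sq[OF assms])
qed

section \<open>Measurability and boundedness of random matrices\<close>

definition bounded_measurable_mat :: "'a measure \<Rightarrow> nat \<Rightarrow> ('a \<Rightarrow> complex mat) \<Rightarrow> bool" where
  "bounded_measurable_mat M N F \<longleftrightarrow> (\<forall>x. F x \<in> carrier_mat N N)
     \<and> (\<forall>i<N. \<forall>j<N. (\<lambda>x. F x $$ (i, j)) \<in> borel_measurable M)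
     \<and> (\<exists>c. \<forall>x. \<forall>i<N. \<forall>j<N. cmod (F x $$ (i, j)) \<le> c)"

lemma bounded_measurable_matI:
  assumes "\<And>x. F x \<in> carrier_mat N N"
    and "\<And>i j. i < N \<Longrightarrow> j < N \<Longrightarrow> (\<lambda>x. F x $$ (i, j)) \<in> borel_measurable M"
    and "\<And>x i j. i < N \<Longrightarrow> j < N \<Longrightarrow> cmod (F x $$ (i, j)) \<le> c"
  shows "bounded_measurable_mat M N F"
  using assms unfolding bounded_measurable_mat_def by blast

lemma bounded_measurable_matE:
  assumes "bounded_measurable_mat M N F"
  obtains c where "\<And>x. F x \<in> carrier_mat N N"
    and "\<And>i j. i < N \<Longrightarrow> j < N \<Longrightarrow> (\<lambda>x. F x $$ (i, j)) \<in> borel_measurable M"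
    and "\<And>x i j. i < N \<Longrightarrow> j < N \<Longrightarrow> cmod (F x $$ (i, j)) \<le> c"
  using assms unfolding bounded_measurable_mat_def by blast

lemma bounded_measurable_mat_const:
  assumes "A \<in> carrier_mat N N"
  shows "bounded_measurable_mat M N (\<lambda>_. A)"
proof (rule bounded_measurable_matI)
  fix i j assume "i < N" "j < N"
  then show "cmod (A $$ (i, j)) \<le> (\<Sum>i<N. \<Sum>j<N. cmod (A $$ (i, j)))"
    using member_le_sum[of i "{..<N}" "\<lambda>i. \<Sum>j<N. cmod (A $$ (i, j))"]
      member_le_sum[of j "{..<N}" "\<lambda>j. cmod (A $$ (i, j))"]
    by (simp add: sum_nonneg)
qed (use assms in auto)

lemma bounded_measurable_mat_mult:
  assumes "bounded_measurable_mat M N F" "bounded_measurable_mat M N G"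
  shows "bounded_measurable_mat M N (\<lambda>x. F x * G x)"
proof -
  obtain a where F: "\<And>x. F x \<in> carrier_mat N N"
    "\<And>i j. i < N \<Longrightarrow> j < N \<Longrightarrow> (\<lambda>x. F x $$ (i, j)) \<in> borel_measurable M"
    "\<And>x i j. i < N \<Longrightarrow> j < N \<Longrightarrow> cmod (F x $$ (i, j)) \<le> a"
    using assms(1) by (rule bounded_measurable_matE) blast
  obtain b where G: "\<And>x. G x \<in> carrier_mat N N"
    "\<And>i j. i < N \<Longrightarrow> j < N \<Longrightarrow> (\<lambda>x. G x $$ (i, j)) \<in> borel_measurable M"
    "\<And>x i j. i < N \<Longrightarrow> j < N \<Longrightarrow> cmod (G x $$ (i, j)) \<le> b"
    using assms(2) by (rule bounded_measurable_matE) blast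
  have entry: "(F x * G x) $$ (i, j) = (\<Sum>m<N. F x $$ (i, m) * G x $$ (m, j))" if "i < N" "j < N" for x i j
    using F(1) G(1) that by (rule index_mult_mat_sum)
  show ?thesis
  proof (rule bounded_measurable_matI)
    fix i j assume ij: "i < N" "j < N"
    show "(\<lambda>x. (F x * G x) $$ (i, j)) \<in> borel_measurable M"
      unfolding entry[OF ij] using F(2) G(2) ij by (intro borel_measurable_sum borel_measurable_times) auto
    fix x
    have "cmod ((F x * G x) $$ (i, j)) \<le> (\<Sum>m<N. cmod (F x $$ (i, m)) * cmod (G x $$ (m, j)))"
      unfolding entry[OF ij] by (rule order_trans[OF norm_sum]) (simp add: norm_mult)
    also have "\<dots> \<le> (\<Sum>m<N. a * b)"
      using F(3) G(3) ij by (intro sum_mono mult_mono) (auto intro: order_trans[OF norm_ge_zero])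
    finally show "cmod ((F x * G x) $$ (i, j)) \<le> N * a * b"
      by simp
  qed (rule mult_carrier_mat[OF F(1) G(1)])
qed

lemma borel_measurable_cnj [measurable]: "cnj \<in> borel_measurable borel"
  by (intro borel_measurable_continuous_onI continuous_on_cnj continuous_on_id)

lemma bounded_measurable_mat_dagger:
  assumes "bounded_measurable_mat M N F"
  shows "bounded_measurable_mat M N (\<lambda>x. dagger (F x))"
proof -
  obtain c where F: "\<And>x. F x \<in> carrier_mat N N"
    "\<And>i j. i < N \<Longrightarrow> j < N \<Longrightarrow> (\<lambda>x. F x $$ (i, j)) \<in> borel_measurable M"
    "\<And>x i j. i < N \<Longrightarrow> j < N \<Longrightarrow> cmod (F x $$ (i, j)) \<le> c"
    using assms by (rule bounded_measurable_matE) blast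
  have entry: "dagger (F x) $$ (i, j) = cnj (F x $$ (j, i))" if "i < N" "j < N" for x i j
    using F(1)[of x] that by (simp add: index_dagger)
  show ?thesis
  proof (rule bounded_measurable_matI)
    fix i j assume ij: "i < N" "j < N"
    show "(\<lambda>x. dagger (F x) $$ (i, j)) \<in> borel_measurable M"
      unfolding entry[OF ij] using F(2)[OF ij(2,1)] by measurable
    show "cmod (dagger (F x) $$ (i, j)) \<le> c" for x
      unfolding entry[OF ij] using F(3)[OF ij(2,1)] by simp
  qed (use F(1) in auto)
qed

lemma bounded_measurable_mat_sandwich:
  "bounded_measurable_mat M N A \<Longrightarrow> bounded_measurable_mat M N S \<Longrightarrow>
    bounded_measurable_mat M N (\<lambda>x. sandwich (A x) (S x))"
  unfolding sandwich_def by (intro bounded_measurable_mat_mult bounded_measurable_mat_dagger)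

lemma bounded_measurable_mat_tensor_op:
  assumes "\<And>k a b. k \<in> {1..n} \<Longrightarrow> a < 2 \<Longrightarrow> b < 2 \<Longrightarrow> (\<lambda>x. G x k $$ (a, b)) \<in> borel_measurable M"
    and "\<And>x k a b. k \<in> {1..n} \<Longrightarrow> a < 2 \<Longrightarrow> b < 2 \<Longrightarrow> cmod (G x k $$ (a, b)) \<le> 1"
  shows "bounded_measurable_mat M (2^n) (\<lambda>x. tensor_op n (G x))"
proof (rule bounded_measurable_matI)
  fix i j :: nat assume ij: "i < 2^n" "j < 2^n"
  show "(\<lambda>x. tensor_op n (G x) $$ (i, j)) \<in> borel_measurable M"
    unfolding index_tensor_op[OF ij] using assms(1) by (intro borel_measurable_prod) auto
  fix x
  have "cmod (\<Prod>k\<in>{1..n}. G x k $$ (qbit n k i, qbit n k j)) \<le> (\<Prod>k\<in>{1..n}. cmod (G x k $$ (qbit n k i, qbit n k j)))"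
    by (rule norm_prod_le)
  also have "\<dots> \<le> 1"
    using assms(2) by (intro prod_le_1) auto
  finally show "cmod (tensor_op n (G x) $$ (i, j)) \<le> 1"
    unfolding index_tensor_op[OF ij] .
qed simp

lemma bounded_measurable_mat_Vlayer:
  assumes "\<And>k. k \<in> {1..n} \<Longrightarrow> (\<lambda>x. \<beta> x j k) \<in> borel_measurable M"
  shows "bounded_measurable_mat M (2^n) (\<lambda>x. Vlayer n (\<beta> x) j)"
  unfolding Vlayer_def
proof (rule bounded_measurable_mat_tensor_op)
  fix k a b :: nat assume "k \<in> {1..n}" "a < 2" "b < 2"
  then show "(\<lambda>x. Wgate (\<beta> x j k) $$ (a, b)) \<in> borel_measurable M"
    and "cmod (Wgate (\<beta> x j k) $$ (a, b)) \<le> 1" for x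
    using assms by (auto simp: Wgate_eq_mat2 less_2_cases)
qed

lemma bounded_measurable_mat_circuit_state:
  assumes "n \<ge> 2" "\<And>j k. j \<in> {1..2 * l} \<Longrightarrow> k \<in> {1..n} \<Longrightarrow> (\<lambda>x. \<beta> x j k) \<in> borel_measurable M"
  shows "bounded_measurable_mat M (2^n) (\<lambda>x. circuit_state n (\<beta> x) l)"
proof -
  have "bounded_measurable_mat M (2^n) (\<lambda>x. layers n (\<beta> x) l)"
    using assms(2)
  proof (induction l)
    case 0
    show ?case by (simp add: bounded_measurable_mat_const)
  next
    case (Suc l)
    have V: "bounded_measurable_mat M (2^n) (\<lambda>x. Vlayer n (\<beta> x) j)" if "j \<in> {1..2 * Suc l}" for j
      using that Suc.prems by (intro bounded_measurable_mat_Vlayer) auto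
    have "bounded_measurable_mat M (2^n) (\<lambda>x. layers n (\<beta> x) l)"
      using Suc.prems by (intro Suc.IH) auto
    then show ?case
      unfolding layers.simps Ulayer_def
      using assms(1) V[of "2 * Suc l"] V[of "2 * Suc l - 1"]
      by (intro bounded_measurable_mat_mult bounded_measurable_mat_const) auto
  qed
  then show ?thesis
    unfolding circuit_state_def by (intro bounded_measurable_mat_sandwich bounded_measurable_mat_const) auto
qed

lemma bounded_measurable_mat_mtrace:
  assumes "bounded_measurable_mat M N F"
  shows "(\<lambda>x. mtrace (F x)) \<in> borel_measurable M" "\<exists>C. \<forall>x. cmod (mtrace (F x)) \<le> C"
proof -
  obtain c where F: "\<And>x. F x \<in> carrier_mat N N"
    "\<And>i j. i < N \<Longrightarrow> j < N \<Longrightarrow> (\<lambda>x. F x $$ (i, j)) \<in> borel_measurable M"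
    "\<And>x i j. i < N \<Longrightarrow> j < N \<Longrightarrow> cmod (F x $$ (i, j)) \<le> c"
    using assms by (rule bounded_measurable_matE) blast
  have trace: "mtrace (F x) = (\<Sum>i<N. F x $$ (i, i))" for x
    using F(1)[of x] by (simp add: mtrace_def)
  show "(\<lambda>x. mtrace (F x)) \<in> borel_measurable M"
    unfolding trace using F(2) by (intro borel_measurable_sum) auto
  have "cmod (mtrace (F x)) \<le> N * c" for x
  proof -
    have "cmod (mtrace (F x)) \<le> (\<Sum>i<N. cmod (F x $$ (i, i)))"
      unfolding trace by (rule norm_sum)
    also have "\<dots> \<le> (\<Sum>i<N. c)"
      using F(3) by (intro sum_mono) auto
    finally show ?thesis by simp
  qed
  then show "\<exists>C. \<forall>x. cmod (mtrace (F x)) \<le> C" by blast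
qed

lemma bounded_measurable_expval:
  assumes "bounded_measurable_mat M (2^n) F"
  shows "(\<lambda>x. expval n P (F x)) \<in> borel_measurable M" "\<exists>C. \<forall>x. \<bar>expval n P (F x)\<bar> \<le> C"
proof -
  have "bounded_measurable_mat M (2^n) (\<lambda>x. qubit1_op n P * F x)"
    using assms by (intro bounded_measurable_mat_mult bounded_measurable_mat_const) auto
  note trace = bounded_measurable_mat_mtrace[OF this]
  show "(\<lambda>x. expval n P (F x)) \<in> borel_measurable M"
    unfolding expval_def using trace(1) by measurable
  show "\<exists>C. \<forall>x. \<bar>expval n P (F x)\<bar> \<le> C"
    using trace(2) abs_Re_le_cmod order_trans unfolding expval_def by blast
qed

lemma integrable_alpha:
  assumes "finite_measure M" "bounded_measurable_mat M (2^n) F"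
  shows "integrable M (\<lambda>x. alpha n (F x))"
proof -
  obtain C1 C3 where "\<And>x. \<bar>expval n (sigma 1) (F x)\<bar> \<le> C1" "\<And>x. \<bar>expval n (sigma 3) (F x)\<bar> \<le> C3"
    using bounded_measurable_expval(2)[OF assms(2)] by metis
  moreover have sq_le: "t\<^sup>2 \<le> C\<^sup>2" if "\<bar>t\<bar> \<le> C" for t C :: real
    using power_mono[OF that abs_ge_zero, of 2] by simp
  ultimately have "norm (alpha n (F x)) \<le> C1\<^sup>2 + C3\<^sup>2" for x
    unfolding alpha_eq_expval by (simp add: add_mono)
  moreover have "(\<lambda>x. alpha n (F x)) \<in> borel_measurable M"
    unfolding alpha_eq_expval using bounded_measurable_expval(1)[OF assms(2)] by measurable
  ultimately show ?thesis
    by (intro finite_measure.integrable_const_bound[OF assms(1)]) auto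
qed

section \<open>The averaged lower bound\<close>

lemma beta_measure_eq: "beta_measure n L = PiM ({1..2 * L + 1} \<times> {1..n}) (\<lambda>_. uniform_angle)"
  by (simp add: beta_measure_def uniform_angle_def)

lemma prob_space_beta_measure: "prob_space (beta_measure n L)"
  unfolding beta_measure_eq by (intro prob_space_PiM prob_space_uniform_angle)

lemma borel_measurable_beta_coordinate:
  assumes "j \<in> {1..2 * L + 1}" "k \<in> {1..n}"
  shows "(\<lambda>x. curry x j k) \<in> borel_measurable (beta_measure n L)"
  using measurable_component_singleton[of "(j, k)" "{1..2 * L + 1} \<times> {1..n}" "\<lambda>_. uniform_angle"] assms
  unfolding beta_measure_eq measurable_cong_sets[OF refl sets_uniform_angle] by simp

lemma bounded_measurable_circuit_state_beta:
  "n \<ge> 2 \<Longrightarrow> l \<le> L \<Longrightarrow> bounded_measurable_mat (beta_measure n L) (2^n) (\<lambda>x. circuit_state n (curry x) l)"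
  by (intro bounded_measurable_mat_circuit_state borel_measurable_beta_coordinate) auto

lemma nn_integral_expval_sigma3_sq_le_Suc:
  assumes "n \<ge> 2" "Suc l \<le> L"
  shows "(\<integral>\<^sup>+x. ennreal ((expval n (sigma 3) (circuit_state n (curry x) l))\<^sup>2) \<partial>beta_measure n L)
       \<le> 4 * (\<integral>\<^sup>+x. ennreal ((expval n (sigma 3) (circuit_state n (curry x) (Suc l)))\<^sup>2) \<partial>beta_measure n L)"
proof -
  let ?M = "beta_measure n L" and ?Z = "expval n (sigma 3)" and ?X = "expval n (sigma 1)"
  define j1 j2 where "j1 = 2 * Suc l - 1" and "j2 = 2 * Suc l"
  define T where "T x = circuit_state n (curry x) l" for x
  define S where "S x = sandwich (CZ2 n) (sandwich (Vlayer n (curry x) j1) (T x))" for x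
  have n1: "n \<ge> 1" and T_carrier: "T x \<in> carrier_mat (2^n) (2^n)" for x
    using assms(1) by (auto simp: T_def)
  have V_carrier: "sandwich (Vlayer n (curry x) j1) (T x) \<in> carrier_mat (2^n) (2^n)" for x
    using T_carrier by simp
  have S_carrier: "S x \<in> carrier_mat (2^n) (2^n)" for x
    using V_carrier assms(1) by (simp add: S_def)
  have Z_S: "?Z (S x) = cos (2 * x (j1, 1)) * ?Z (T x) - sin (2 * x (j1, 1)) * ?X (T x)" for x
    unfolding S_def expval_sigma3_sandwich_sign_diag[OF sign_diag_CZ2[OF assms(1)] V_carrier]
      expval_sigma3_sandwich_Vlayer[OF n1 T_carrier] by simp
  have Z_Suc: "?Z (circuit_state n (curry x) (Suc l)) = cos (2 * x (j2, 1)) * ?Z (S x) - sin (2 * x (j2, 1)) * ?X (S x)" for x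
  proof -
    have "circuit_state n (curry x) (Suc l) = sandwich (CZ1 n) (sandwich (Vlayer n (curry x) j2) (S x))"
      unfolding circuit_state_Suc[OF assms(1)] S_def T_def j1_def j2_def ..
    then show ?thesis
      using S_carrier by (simp add: expval_sigma3_sandwich_sign_diag[OF sign_diag_CZ1[OF assms(1)]]
          expval_sigma3_sandwich_Vlayer[OF n1])
  qed
  have bm_T: "bounded_measurable_mat ?M (2^n) T"
    unfolding T_def using assms by (intro bounded_measurable_circuit_state_beta) auto
  have bm_S: "bounded_measurable_mat ?M (2^n) S"
    unfolding S_def using assms bm_T
    by (intro bounded_measurable_mat_sandwich bounded_measurable_mat_const bounded_measurable_mat_Vlayer
        borel_measurable_beta_coordinate) (auto simp: j1_def)
  have T_indep: "T (x(p := y)) = T x" if "fst p > 2 * l" for x p y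
    unfolding T_def using that by (intro circuit_state_cong) (auto simp: fun_eq_iff)
  have S_indep: "S (x((j2, 1) := y)) = S x" for x y
  proof -
    have "Vlayer n (curry (x((j2, 1) := y))) j1 = Vlayer n (curry x) j1"
      by (simp add: Vlayer_def j1_def j2_def)
    then show ?thesis
      using T_indep[of "(j2, 1)"] by (simp add: S_def j2_def)
  qed
  have finite: "finite ({1..2 * L + 1} \<times> {1..n})" by simp
  have first_rotation: "(\<integral>\<^sup>+x. ennreal ((?Z (T x))\<^sup>2) \<partial>?M) \<le> 2 * (\<integral>\<^sup>+x. ennreal ((?Z (S x))\<^sup>2) \<partial>?M)"
    unfolding Z_S beta_measure_eq
    using assms bounded_measurable_expval(1)[OF bm_T, unfolded beta_measure_eq] T_indep[of "(j1, 1)"]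
    by (intro nn_integral_sq_le_rotated[OF finite]) (auto simp: j1_def)
  have second_rotation: "(\<integral>\<^sup>+x. ennreal ((?Z (S x))\<^sup>2) \<partial>?M)
      \<le> 2 * (\<integral>\<^sup>+x. ennreal ((?Z (circuit_state n (curry x) (Suc l)))\<^sup>2) \<partial>?M)"
    unfolding Z_Suc beta_measure_eq
    using assms bounded_measurable_expval(1)[OF bm_S, unfolded beta_measure_eq] S_indep
    by (intro nn_integral_sq_le_rotated[OF finite]) (auto simp: j2_def)
  note first_rotation
  also have "2 * (\<integral>\<^sup>+x. ennreal ((?Z (S x))\<^sup>2) \<partial>?M)
      \<le> 2 * (2 * (\<integral>\<^sup>+x. ennreal ((?Z (circuit_state n (curry x) (Suc l)))\<^sup>2) \<partial>?M))"
    using second_rotation by (rule mult_left_mono) simp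
  finally show ?thesis
    by (simp add: T_def mult.assoc[symmetric])
qed

lemma nn_integral_expval_sigma3_sq_ge:
  assumes "n \<ge> 2" "l \<le> L"
  shows "ennreal ((1 / 4) ^ l) \<le> (\<integral>\<^sup>+x. ennreal ((expval n (sigma 3) (circuit_state n (curry x) l))\<^sup>2) \<partial>beta_measure n L)"
  using assms(2)
proof (induction l)
  case 0
  have "expval n (sigma 3) (circuit_state n \<beta> 0) = -1" for \<beta>
    using assms(1) by (simp add: circuit_state_def sandwich_def expval_sigma3_proj1)
  then show ?case
    using prob_space.emeasure_space_1[OF prob_space_beta_measure] by simp
next
  case (Suc l)
  let ?I = "\<lambda>l. \<integral>\<^sup>+x. ennreal ((expval n (sigma 3) (circuit_state n (curry x) l))\<^sup>2) \<partial>beta_measure n L"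
  have quarter: "ennreal (1 / 4) * 4 = 1"
    by (simp flip: ennreal_numeral ennreal_mult')
  have "ennreal ((1 / 4) ^ Suc l) = ennreal (1 / 4) * ennreal ((1 / 4) ^ l)"
    by (subst ennreal_mult[symmetric]) auto
  also have "\<dots> \<le> ennreal (1 / 4) * (4 * ?I (Suc l))"
    using order_trans[OF Suc.IH nn_integral_expval_sigma3_sq_le_Suc[OF assms(1)]] Suc.prems
    by (intro mult_left_mono) auto
  also have "\<dots> = ?I (Suc l)"
    by (simp add: mult.assoc[symmetric] quarter)
  finally show ?case .
qed

lemma integrable_alpha_rho_in:
  assumes "n \<ge> 2"
  shows "integrable (beta_measure n L) (\<lambda>x. alpha n (rho_in n L (curry x)))"
  unfolding rho_in_eq_sandwich[OF assms]
  using assms prob_space_beta_measure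
  by (intro integrable_alpha bounded_measurable_mat_sandwich bounded_measurable_mat_Vlayer
      bounded_measurable_circuit_state_beta borel_measurable_beta_coordinate) (auto simp: prob_space_def)

lemma nn_integral_alpha_rho_in_ge:
  assumes "n \<ge> 2"
  shows "ennreal ((1 / 4) ^ L) \<le> (\<integral>\<^sup>+x. ennreal (alpha n (rho_in n L (curry x))) \<partial>beta_measure n L)"
proof -
  have "ennreal ((1 / 4) ^ L)
      \<le> (\<integral>\<^sup>+x. ennreal ((expval n (sigma 3) (circuit_state n (curry x) L))\<^sup>2) \<partial>beta_measure n L)"
    using assms by (rule nn_integral_expval_sigma3_sq_ge) simp
  also have "\<dots> \<le> (\<integral>\<^sup>+x. ennreal (alpha n (rho_in n L (curry x))) \<partial>beta_measure n L)"
    using assms by (intro nn_integral_mono ennreal_leI) (simp add: alpha_rho_in)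
  finally show ?thesis .
qed

theorem theorem3:
  fixes n L :: nat
  assumes "even n" and "n \<ge> 2" and "L \<ge> 1"
  shows "(\<integral>b. alpha n (rho_in n L (\<lambda>j k. b (j, k))) \<partial>beta_measure n L) \<ge> 2 powr (- 2 * real L)"
proof -
  let ?f = "\<lambda>x. alpha n (rho_in n L (curry x))"
  have "(\<integral>\<^sup>+x. ennreal (?f x) \<partial>beta_measure n L) = ennreal (integral\<^sup>L (beta_measure n L) ?f)"
    using integrable_alpha_rho_in[OF assms(2)] by (intro nn_integral_eq_integral) (auto simp: alpha_eq_expval)
  then have "ennreal ((1 / 4) ^ L) \<le> ennreal (integral\<^sup>L (beta_measure n L) ?f)"
    using nn_integral_alpha_rho_in_ge[OF assms(2), of L] by simp
  then have "(1 / 4) ^ L \<le> integral\<^sup>L (beta_measure n L) ?f"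
    by (simp add: ennreal_le_iff integral_nonneg_AE alpha_eq_expval)
  moreover have "2 powr (- 2 * real L) = (1 / 4) ^ L"
    by (simp add: powr_minus powr_realpow power_mult power_one_over inverse_eq_divide flip: powr_powr)
  ultimately show ?thesis
    by (simp add: curry_def)
qed

end
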